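(* For every $\varepsilon>0$ there exists a convex polygon $C$ in the plane such that $C$ has a unique minimum-area enclosing rectangle $R_A$ and a unique minimum-perimeter enclosing rectangle $R_P$, and the orientations of $R_A$ and $R_P$ differ by an angle greater than $90^\circ-\varepsilon$.
   Context: For a convex region $C$ in the plane, an enclosing rectangle of $C$ is a rectangle (of arbitrary position and rotation) containing $C$. A minimum-area (resp. minimum-perimeter) enclosing rectangle is an enclosing rectangle of least area (resp. least perimeter) among all enclosing rectangles of $C$. The orientation of a rectangle is the direction of the line containing one of its longer sides. The difference in orientation of two rectangles is the (unsigned) angle in $[0^\circ,90^\circ]$ between these two lines. *)

theory Defs
  imports "HOL-Analysis.Analysis"
begin

text \<open>The plane is modelled by the complex numbers.  A (closed, non-degenerate)
rectangle with corner c, rotation angle th and side lengths a (along cis th)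
and b (along i * cis th).\<close>

definition rect_set :: "complex \<Rightarrow> real \<Rightarrow> real \<Rightarrow> real \<Rightarrow> complex set" where
  "rect_set c th a b =
     {c + of_real s * cis th + of_real t * (\<i> * cis th) | s t. 0 \<le> s \<and> s \<le> a \<and> 0 \<le> t \<and> t \<le> b}"

definition is_rectangle :: "complex set \<Rightarrow> bool" where
  "is_rectangle R \<longleftrightarrow> (\<exists>c th a b. 0 < a \<and> 0 < b \<and> R = rect_set c th a b)"

definition rect_area :: "complex set \<Rightarrow> real" where
  "rect_area R = (THE A. \<exists>c th a b. 0 < a \<and> 0 < b \<and> R = rect_set c th a b \<and> A = a * b)"

definition rect_perimeter :: "complex set \<Rightarrow> real" where
  "rect_perimeter R = (THE p. \<exists>c th a b. 0 < a \<and> 0 < b \<and> R = rect_set c th a b \<and> p = 2 * (a + b))"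

definition rect_orientation :: "complex set \<Rightarrow> complex \<Rightarrow> bool" where
  "rect_orientation R d \<longleftrightarrow>
     (\<exists>c th a b. 0 < b \<and> b \<le> a \<and> R = rect_set c th a b \<and> d = cis th)"

text \<open>Unsigned angle in [0, pi/2] between lines with unit directions d1 d2.\<close>
definition line_angle :: "complex \<Rightarrow> complex \<Rightarrow> real" where
  "line_angle d1 d2 = arccos \<bar>d1 \<bullet> d2\<bar>"

definition convex_polygon :: "complex set \<Rightarrow> bool" where
  "convex_polygon C \<longleftrightarrow> (\<exists>P. finite P \<and> C = convex hull P) \<and> interior C \<noteq> {}"

definition enclosing_rectangle :: "complex set \<Rightarrow> complex set \<Rightarrow> bool" where
  "enclosing_rectangle C R \<longleftrightarrow> is_rectangle R \<and> C \<subseteq> R"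

definition min_area_rect :: "complex set \<Rightarrow> complex set \<Rightarrow> bool" where
  "min_area_rect C R \<longleftrightarrow> enclosing_rectangle C R \<and>
     (\<forall>R'. enclosing_rectangle C R' \<longrightarrow> rect_area R \<le> rect_area R')"

definition min_perimeter_rect :: "complex set \<Rightarrow> complex set \<Rightarrow> bool" where
  "min_perimeter_rect C R \<longleftrightarrow> enclosing_rectangle C R \<and>
     (\<forall>R'. enclosing_rectangle C R' \<longrightarrow> rect_perimeter R \<le> rect_perimeter R')"

end

theory Submission
  imports Defs "HOL-Real_Asymp.Real_Asymp"
begin

text \<open>The polygon is the convex hull of the points \<plusminus>v for four vertices v that lie on the boundary
  of both an axis-parallel rectangle RA with sides a > b and the rectangle RP with sides p < q
  turned by a small angle \<delta>. Its width function w(d) = max |2 v \<bullet> d| is bounded below on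
  the cone between two consecutive side normals of RA and RP by the linear function belonging
  to their common vertex. On the unit circle this gives w(e) w(i e) \<ge> a b, with equality only
  for the directions of RA, and w(e) + w(i e) \<ge> p + q, with equality only for the directions
  of RP, as soon as a b < p q and p + q < a + b. So RA and RP are the unique optimal rectangles,
  and their orientations differ by \<pi>/2 - \<delta>. For suitable parameters depending on \<delta>, all
  required inequalities hold for small \<delta>, as their asymptotic expansions at \<delta> = 0 show.\<close>

section \<open>Rectangles in the plane\<close>

lemma inner_cis_cis [simp]: "cis t \<bullet> cis t = 1"
  and inner_i_cis_i_cis [simp]: "(\<i> * cis t) \<bullet> (\<i> * cis t) = 1"
  and inner_i_cis_cis [simp]: "(\<i> * cis t) \<bullet> cis t = 0"
  and inner_cis_i_cis [simp]: "cis t \<bullet> (\<i> * cis t) = 0"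
  by (simp_all add: inner_complex_def flip: power2_eq_square)

lemma inner_of_real_mult_left: "(of_real r * x) \<bullet> y = r * (x \<bullet> y)" for x y :: complex
  by (simp add: inner_complex_def algebra_simps)

lemma cis_coordinates: "w = of_real (w \<bullet> cis t) * cis t + of_real (w \<bullet> (\<i> * cis t)) * (\<i> * cis t)"
  by (intro complex_eqI; simp add: inner_complex_def algebra_simps;
      simp flip: distrib_left add: sin_cos_squared_add3)

lemma rect_set_eq:
  "rect_set c t a b = {z. 0 \<le> (z - c) \<bullet> cis t \<and> (z - c) \<bullet> cis t \<le> a \<and>
      0 \<le> (z - c) \<bullet> (\<i> * cis t) \<and> (z - c) \<bullet> (\<i> * cis t) \<le> b}"
proof -
  have coords: "(of_real s * cis t + of_real r * (\<i> * cis t)) \<bullet> cis t = s"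
    "(of_real s * cis t + of_real r * (\<i> * cis t)) \<bullet> (\<i> * cis t) = r" for s r
    by (simp_all add: inner_add_left inner_of_real_mult_left)
  have "z \<in> rect_set c t a b \<longleftrightarrow> z \<in> {z. 0 \<le> (z - c) \<bullet> cis t \<and> (z - c) \<bullet> cis t \<le> a \<and>
      0 \<le> (z - c) \<bullet> (\<i> * cis t) \<and> (z - c) \<bullet> (\<i> * cis t) \<le> b}" for z
  proof
    assume "z \<in> rect_set c t a b"
    then show "z \<in> {z. 0 \<le> (z - c) \<bullet> cis t \<and> (z - c) \<bullet> cis t \<le> a \<and>
      0 \<le> (z - c) \<bullet> (\<i> * cis t) \<and> (z - c) \<bullet> (\<i> * cis t) \<le> b}"
      unfolding rect_set_def by (auto simp: coords)
  next
    assume "z \<in> {z. 0 \<le> (z - c) \<bullet> cis t \<and> (z - c) \<bullet> cis t \<le> a \<and>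
      0 \<le> (z - c) \<bullet> (\<i> * cis t) \<and> (z - c) \<bullet> (\<i> * cis t) \<le> b}"
    moreover have "z = c + of_real ((z - c) \<bullet> cis t) * cis t + of_real ((z - c) \<bullet> (\<i> * cis t)) * (\<i> * cis t)"
      using cis_coordinates[of "z - c" t] by (simp add: algebra_simps)
    ultimately show "z \<in> rect_set c t a b"
      unfolding rect_set_def by blast
  qed
  then show ?thesis by blast
qed

lemma rect_set_corner:
  "0 \<le> s \<Longrightarrow> s \<le> a \<Longrightarrow> 0 \<le> r \<Longrightarrow> r \<le> b \<Longrightarrow>
   c + of_real s * cis t + of_real r * (\<i> * cis t) \<in> rect_set c t a b"
  unfolding rect_set_def by blast

lemma rect_set_diameter_bounds:
  assumes "z1 \<in> rect_set c t a b" "z2 \<in> rect_set c t a b"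
  shows "\<bar>(z1 - z2) \<bullet> cis t\<bar> \<le> a" "\<bar>(z1 - z2) \<bullet> (\<i> * cis t)\<bar> \<le> b"
proof -
  have "(z1 - z2) \<bullet> w = (z1 - c) \<bullet> w - (z2 - c) \<bullet> w" for w
    by (simp add: inner_diff_left)
  then show "\<bar>(z1 - z2) \<bullet> cis t\<bar> \<le> a" "\<bar>(z1 - z2) \<bullet> (\<i> * cis t)\<bar> \<le> b"
    using assms unfolding rect_set_eq by auto
qed

lemma rect_set_subset_sides:
  assumes "0 \<le> a" "0 \<le> b" "rect_set c t a b \<subseteq> rect_set c' t' a' b'"
  shows "a * \<bar>cis t \<bullet> cis t'\<bar> + b * \<bar>(\<i> * cis t) \<bullet> cis t'\<bar> \<le> a'"
    "a * \<bar>(\<i> * cis t) \<bullet> cis t'\<bar> + b * \<bar>cis t \<bullet> cis t'\<bar> \<le> b'"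
proof -
  define X where "X = cis t \<bullet> cis t'"
  define Y where "Y = (\<i> * cis t) \<bullet> cis t'"
  have XY: "cis t \<bullet> (\<i> * cis t') = - Y" "(\<i> * cis t) \<bullet> (\<i> * cis t') = X"
    unfolding X_def Y_def by (simp_all add: inner_complex_def)
  let ?corner = "\<lambda>s r. c + of_real s * cis t + of_real r * (\<i> * cis t)"
  have corners: "?corner a b \<in> rect_set c' t' a' b'" "?corner 0 0 \<in> rect_set c' t' a' b'"
    "?corner a 0 \<in> rect_set c' t' a' b'" "?corner 0 b \<in> rect_set c' t' a' b'"
    by (intro subsetD[OF assms(3)] rect_set_corner; use assms in simp)+
  have diffs: "?corner a b - ?corner 0 0 = of_real a * cis t + of_real b * (\<i> * cis t)"
    "?corner a 0 - ?corner 0 b = of_real a * cis t - of_real b * (\<i> * cis t)"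
    by simp_all
  have "\<bar>a * X + b * Y\<bar> \<le> a'" "\<bar>a * X - b * Y\<bar> \<le> a'"
    "\<bar>a * - Y + b * X\<bar> \<le> b'" "\<bar>a * - Y - b * X\<bar> \<le> b'"
    using rect_set_diameter_bounds[OF corners(1,2)] rect_set_diameter_bounds[OF corners(3,4)]
    unfolding diffs
    by (simp_all only: inner_add_left inner_diff_left inner_of_real_mult_left XY
        flip: X_def Y_def)
  then have "\<bar>a * X\<bar> + \<bar>b * Y\<bar> \<le> a'" "\<bar>a * Y\<bar> + \<bar>b * X\<bar> \<le> b'"
    by (simp_all add: abs_le_iff) arith+
  then show "a * \<bar>X\<bar> + b * \<bar>Y\<bar> \<le> a'" "a * \<bar>Y\<bar> + b * \<bar>X\<bar> \<le> b'"
    using assms(1,2) by (simp_all add: abs_mult)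
qed

lemma rect_set_sides_unique:
  assumes "0 < a" "0 < b" "0 < a'" "0 < b'" "rect_set c t a b = rect_set c' t' a' b'"
  shows "(a' = a \<and> b' = b) \<or> (a' = b \<and> b' = a)"
proof -
  txt \<open>Containment in both directions forces X + Y \<le> 1 for the direction cosines X, Y, which
    lie on the unit circle; hence one of them vanishes.\<close>
  define X where "X = \<bar>cis t \<bullet> cis t'\<bar>"
  define Y where "Y = \<bar>(\<i> * cis t) \<bullet> cis t'\<bar>"
  have swap: "\<bar>cis t' \<bullet> cis t\<bar> = X" "\<bar>(\<i> * cis t') \<bullet> cis t\<bar> = Y"
    unfolding X_def Y_def by (simp_all add: inner_complex_def algebra_simps)
  have sides: "a * X + b * Y \<le> a'" "a * Y + b * X \<le> b'" "a' * X + b' * Y \<le> a" "a' * Y + b' * X \<le> b"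
    using rect_set_subset_sides[of a b c t c' t' a' b'] rect_set_subset_sides[of a' b' c' t' c t a b]
      assms unfolding X_def Y_def swap by auto
  have unit: "X\<^sup>2 + Y\<^sup>2 = 1"
    unfolding X_def Y_def power2_abs
    by (simp add: inner_complex_def, use sin_cos_squared_add[of t] sin_cos_squared_add[of t'] in algebra)
  have nonneg: "0 \<le> X" "0 \<le> Y"
    unfolding X_def Y_def by simp_all
  have m1: "(a + b) * (X + Y) \<le> a' + b'" and m2: "(a' + b') * (X + Y) \<le> a + b"
    using sides by (simp_all add: algebra_simps)
  have "(a + b) * ((X + Y) * (X + Y)) \<le> (a' + b') * (X + Y)"
    using mult_right_mono[OF m1] nonneg by (simp add: mult.assoc)
  then have "(a + b) * ((X + Y) * (X + Y)) \<le> a + b"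
    using m2 by linarith
  then have "(X + Y) * (X + Y) \<le> 1"
    using assms(1,2) mult_le_cancel_left_pos[of "a + b" "(X + Y) * (X + Y)" 1] by simp
  moreover have "(X + Y) * (X + Y) = 1 + 2 * (X * Y)"
    using unit by (simp add: power2_eq_square algebra_simps)
  ultimately have "X * Y = 0"
    using mult_nonneg_nonneg[OF nonneg] by linarith
  then consider "X = 0" "Y = 1" | "Y = 0" "X = 1"
    using unit nonneg by (auto simp: power2_eq_1_iff)
  then show ?thesis
  proof cases
    case 1
    then show ?thesis using sides by simp
  next
    case 2
    then show ?thesis using sides by simp
  qed
qed

lemma rect_area_rect_set: "0 < a \<Longrightarrow> 0 < b \<Longrightarrow> rect_area (rect_set c t a b) = a * b"
  unfolding rect_area_def
  by (rule the_equality) (use rect_set_sides_unique in fastforce)+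

lemma rect_perimeter_rect_set: "0 < a \<Longrightarrow> 0 < b \<Longrightarrow> rect_perimeter (rect_set c t a b) = 2 * (a + b)"
  unfolding rect_perimeter_def
  by (rule the_equality) (use rect_set_sides_unique in fastforce)+

definition centred_box :: "complex \<Rightarrow> real \<Rightarrow> real \<Rightarrow> complex set" where
  "centred_box d a b = {z. \<bar>z \<bullet> d\<bar> \<le> a / 2 \<and> \<bar>z \<bullet> (\<i> * d)\<bar> \<le> b / 2}"

lemma centred_box_eq_rect_set:
  "centred_box (cis t) a b = rect_set (- (of_real (a / 2) * cis t + of_real (b / 2) * (\<i> * cis t))) t a b"
proof -
  have "(z - - (of_real (a / 2) * cis t + of_real (b / 2) * (\<i> * cis t))) \<bullet> cis t = z \<bullet> cis t + a / 2"
    "(z - - (of_real (a / 2) * cis t + of_real (b / 2) * (\<i> * cis t))) \<bullet> (\<i> * cis t) = z \<bullet> (\<i> * cis t) + b / 2"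
    for z by (simp_all only: diff_minus_eq_add inner_add_left inner_of_real_mult_left) simp_all
  then show ?thesis
    unfolding centred_box_def rect_set_eq by (auto simp: abs_le_iff)
qed

lemma mem_centred_box_iff:
  "z \<in> centred_box d a b \<longleftrightarrow> \<bar>2 * (z \<bullet> d)\<bar> \<le> a \<and> \<bar>2 * (z \<bullet> (\<i> * d))\<bar> \<le> b"
  unfolding centred_box_def by (simp add: abs_mult mult.commute)

lemma centred_box_uminus: "centred_box (- d) a b = centred_box d a b"
  unfolding centred_box_def by simp

lemma centred_box_rotate: "centred_box (\<i> * d) a b = centred_box d b a"
  unfolding centred_box_def by (auto simp flip: mult.assoc)

lemma convex_centred_box: "convex (centred_box d a b)"
proof -
  have "centred_box d a b = {z. d \<bullet> z \<le> a / 2} \<inter> {z. (- d) \<bullet> z \<le> a / 2} \<inter>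
      {z. (\<i> * d) \<bullet> z \<le> b / 2} \<inter> {z. (- (\<i> * d)) \<bullet> z \<le> b / 2}"
    unfolding centred_box_def by (auto simp: abs_le_iff inner_commute)
  then show ?thesis
    by (simp only: convex_Int convex_halfspace_le)
qed

lemma rect_set_eq_centred_box:
  assumes R: "R = rect_set c t a b"
    and v: "v \<in> R" "- v \<in> R" "\<bar>2 * (v \<bullet> cis t)\<bar> = a"
    and w: "w \<in> R" "- w \<in> R" "\<bar>2 * (w \<bullet> (\<i> * cis t))\<bar> = b"
  shows "R = centred_box (cis t) a b"
proof -
  have shift: "(z - c) \<bullet> x = z \<bullet> x - c \<bullet> x" for z x :: complex
    by (simp add: inner_diff_left)
  have "0 \<le> v \<bullet> cis t - c \<bullet> cis t" "0 \<le> - (v \<bullet> cis t) - c \<bullet> cis t"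
    "v \<bullet> cis t - c \<bullet> cis t \<le> a" "- (v \<bullet> cis t) - c \<bullet> cis t \<le> a"
    using v(1,2) unfolding R rect_set_eq shift by auto
  then have c1: "c \<bullet> cis t = - a / 2"
    using v(3) by (auto simp: abs_if split: if_splits)
  have "0 \<le> w \<bullet> (\<i> * cis t) - c \<bullet> (\<i> * cis t)" "0 \<le> - (w \<bullet> (\<i> * cis t)) - c \<bullet> (\<i> * cis t)"
    "w \<bullet> (\<i> * cis t) - c \<bullet> (\<i> * cis t) \<le> b" "- (w \<bullet> (\<i> * cis t)) - c \<bullet> (\<i> * cis t) \<le> b"
    using w(1,2) unfolding R rect_set_eq shift by auto
  then have c2: "c \<bullet> (\<i> * cis t) = - b / 2"
    using w(3) by (auto simp: abs_if split: if_splits)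
  show ?thesis
    unfolding R rect_set_eq centred_box_def shift c1 c2 by (auto simp: abs_le_iff)
qed

lemma enclosing_rectangleE:
  assumes "enclosing_rectangle C R"
  obtains c t a b where "0 < a" "0 < b" "R = rect_set c t a b" "C \<subseteq> R"
  using assms unfolding enclosing_rectangle_def is_rectangle_def by blast

section \<open>Widths of centrally symmetric polygons\<close>

definition symmetric_hull :: "complex set \<Rightarrow> complex set" where
  "symmetric_hull V = convex hull (V \<union> uminus ` V)"

text \<open>For finite V, this is the width of symmetric_hull V in direction d.\<close>
definition width :: "complex set \<Rightarrow> complex \<Rightarrow> real" where
  "width V d = Max ((\<lambda>v. \<bar>2 * (v \<bullet> d)\<bar>) ` V)"

lemma width_ge: "finite V \<Longrightarrow> v \<in> V \<Longrightarrow> \<bar>2 * (v \<bullet> d)\<bar> \<le> width V d"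
  unfolding width_def by simp

lemma width_attained:
  assumes "finite V" "V \<noteq> {}"
  shows "\<exists>v\<in>V. \<bar>2 * (v \<bullet> d)\<bar> = width V d"
proof -
  have "width V d \<in> (\<lambda>v. \<bar>2 * (v \<bullet> d)\<bar>) ` V"
    unfolding width_def using assms by (intro Max_in) auto
  then show ?thesis by auto
qed

lemma width_eqI:
  assumes "finite V" "\<And>v. v \<in> V \<Longrightarrow> \<bar>2 * (v \<bullet> d)\<bar> \<le> w" "v0 \<in> V" "\<bar>2 * (v0 \<bullet> d)\<bar> = w"
  shows "width V d = w"
  unfolding width_def using assms by (intro Max_eqI) auto

lemma width_nonneg: "finite V \<Longrightarrow> V \<noteq> {} \<Longrightarrow> 0 \<le> width V d"
  using width_attained[of V d] by force

lemma width_uminus [simp]: "width V (- d) = width V d"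
  unfolding width_def by simp

lemma width_rotate_twice [simp]: "width V (\<i> * (\<i> * d)) = width V d"
  by (simp flip: mult.assoc)

lemma symmetric_hull_subset:
  assumes "V \<subseteq> S" "convex S" "\<And>z. z \<in> S \<Longrightarrow> - z \<in> S"
  shows "symmetric_hull V \<subseteq> S"
  unfolding symmetric_hull_def using assms by (intro hull_minimal) auto

lemma symmetric_hull_subset_centred_box:
  "V \<subseteq> centred_box d a b \<Longrightarrow> symmetric_hull V \<subseteq> centred_box d a b"
  by (rule symmetric_hull_subset[OF _ convex_centred_box]) (auto simp: centred_box_def)

lemma symmetric_pair_in_symmetric_hull: "v \<in> V \<Longrightarrow> v \<in> symmetric_hull V \<and> - v \<in> symmetric_hull V"
  unfolding symmetric_hull_def by (auto intro: hull_inc)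

lemma width_le_rect_sides:
  assumes "finite V" "V \<noteq> {}" "symmetric_hull V \<subseteq> rect_set c t a b"
  shows "width V (cis t) \<le> a" "width V (\<i> * cis t) \<le> b"
proof -
  have bounds: "\<bar>2 * (v \<bullet> cis t)\<bar> \<le> a \<and> \<bar>2 * (v \<bullet> (\<i> * cis t))\<bar> \<le> b" if "v \<in> V" for v
  proof -
    have "v \<in> rect_set c t a b" "- v \<in> rect_set c t a b"
      using symmetric_pair_in_symmetric_hull[OF that] assms(3) by auto
    moreover have "(v - - v) \<bullet> x = 2 * (v \<bullet> x)" for x
      by (simp add: inner_complex_def)
    ultimately show ?thesis
      using rect_set_diameter_bounds[of v c t a b "- v"] by simp
  qed
  show "width V (cis t) \<le> a" "width V (\<i> * cis t) \<le> b"
    unfolding width_def using bounds assms(1,2) by (auto simp: Max_le_iff)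
qed

lemma width_eq_box_side:
  assumes "finite V" "V \<subseteq> centred_box d \<alpha> \<beta>" "v \<in> V" "\<bar>2 * (v \<bullet> d)\<bar> = \<alpha>"
  shows "width V d = \<alpha>"
  using assms by (intro width_eqI) (auto simp: mem_centred_box_iff)

lemma quadrant_representative:
  fixes d :: complex
  assumes "d \<noteq> 0"
  obtains e where "e \<in> {d, \<i> * d, - d, - (\<i> * d)}" "0 < Re e" "0 \<le> Im e"
proof -
  have "Re d \<noteq> 0 \<or> Im d \<noteq> 0"
    using assms by (simp add: complex_eq_iff)
  then consider "0 < Re d" "0 \<le> Im d" | "Re d \<le> 0" "0 < Im d" | "Re d < 0" "Im d \<le> 0" | "0 \<le> Re d" "Im d < 0"
    by fastforce
  then show ?thesis
    by cases (use that in \<open>fastforce+\<close>)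
qed

lemma quarter_turn_reduction:
  fixes f :: "complex \<Rightarrow> 'a"
  assumes f: "\<And>z. f (\<i> * z) = f z" and "d \<noteq> 0"
  obtains e where "0 < Re e" "0 \<le> Im e" "f e = f d" "d \<in> {e, - e, \<i> * e, - (\<i> * e)}"
proof -
  have f_minus: "f (- z) = f z" for z
    using f[of "\<i> * z"] f[of z] by (simp flip: mult.assoc)
  obtain e where e: "e \<in> {d, \<i> * d, - d, - (\<i> * d)}" "0 < Re e" "0 \<le> Im e"
    using quadrant_representative[OF \<open>d \<noteq> 0\<close>] .
  have "f e = f d \<and> d \<in> {e, - e, \<i> * e, - (\<i> * e)}"
    using e(1) by (auto simp: f f_minus simp flip: mult.assoc)
  then show ?thesis
    using that e(2,3) by blast
qed

lemma first_quadrant_cone_decomposition: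
  assumes "0 < Re u" "0 < Im u" "0 \<le> Re e" "0 \<le> Im e"
  obtains l m where "0 \<le> l" "0 \<le> m" "e = of_real l + of_real m * u"
    | l m where "0 \<le> l" "0 \<le> m" "e = of_real l * u + of_real m * \<i>"
proof (cases "Im e * Re u \<le> Re e * Im u")
  case True
  define m where "m = Im e / Im u"
  have "0 \<le> Re e - m * Re u" "0 \<le> m"
    using True assms unfolding m_def by (simp_all add: field_simps)
  moreover have "e = of_real (Re e - m * Re u) + of_real m * u"
    using assms unfolding m_def by (simp add: complex_eq_iff field_simps)
  ultimately show ?thesis
    using that(1) by blast
next
  case False
  define l where "l = Re e / Re u"
  have "0 \<le> l" "0 \<le> Im e - l * Im u"
    using False assms unfolding l_def by (simp_all add: field_simps)
  moreover have "e = of_real l * u + of_real (Im e - l * Im u) * \<i>"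
    using assms unfolding l_def by (simp add: complex_eq_iff field_simps)
  ultimately show ?thesis
    using that(2) by blast
qed

lemma norm_cone_combination_sq:
  assumes "norm u = 1"
  shows "(norm (of_real l + of_real m * u))\<^sup>2 = l\<^sup>2 + 2 * Re u * l * m + m\<^sup>2"
    and "(norm (of_real l * u + of_real m * \<i>))\<^sup>2 = l\<^sup>2 + 2 * Im u * l * m + m\<^sup>2"
proof -
  have "(Re u)\<^sup>2 + (Im u)\<^sup>2 = 1"
    using assms cmod_power2[of u] by simp
  then show "(norm (of_real l + of_real m * u))\<^sup>2 = l\<^sup>2 + 2 * Re u * l * m + m\<^sup>2"
    "(norm (of_real l * u + of_real m * \<i>))\<^sup>2 = l\<^sup>2 + 2 * Im u * l * m + m\<^sup>2"
    unfolding cmod_power2 by (simp_all, algebra+)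
qed

lemma inner_cone_combination:
  fixes x y :: complex
  shows "x \<bullet> (of_real l + of_real m * y) = l * (x \<bullet> 1) + m * (x \<bullet> y)"
    and "x \<bullet> (\<i> * (of_real l + of_real m * y)) = l * (x \<bullet> \<i>) + m * (x \<bullet> (\<i> * y))"
    and "x \<bullet> (of_real l * y + of_real m * \<i>) = l * (x \<bullet> y) + m * (x \<bullet> \<i>)"
    and "x \<bullet> (\<i> * (of_real l * y + of_real m * \<i>)) = l * (x \<bullet> (\<i> * y)) - m * (x \<bullet> 1)"
  by (simp_all add: inner_complex_def algebra_simps)

section \<open>Quadratic forms on the unit circle\<close>

lemma quadratic_form_ge_on_unit_curve:
  fixes l m c P X Y Z :: real
  assumes "0 \<le> l" "0 \<le> m" "l\<^sup>2 + 2 * c * l * m + m\<^sup>2 = 1"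
    and "P \<le> X" "P \<le> Y" "2 * P * c \<le> Z"
  shows "P \<le> X * l\<^sup>2 + Z * l * m + Y * m\<^sup>2"
    and "X * l\<^sup>2 + Z * l * m + Y * m\<^sup>2 \<le> P \<Longrightarrow> (P < X \<longrightarrow> l = 0) \<and> (P < Y \<longrightarrow> m = 0)"
proof -
  have split: "X * l\<^sup>2 + Z * l * m + Y * m\<^sup>2 - P = (X - P) * l\<^sup>2 + (Z - 2 * P * c) * (l * m) + (Y - P) * m\<^sup>2"
    using assms(3) by algebra
  have terms: "0 \<le> (X - P) * l\<^sup>2" "0 \<le> (Z - 2 * P * c) * (l * m)" "0 \<le> (Y - P) * m\<^sup>2"
    using assms by simp_all
  show "P \<le> X * l\<^sup>2 + Z * l * m + Y * m\<^sup>2"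
    using split terms by linarith
  assume "X * l\<^sup>2 + Z * l * m + Y * m\<^sup>2 \<le> P"
  then have "(X - P) * l\<^sup>2 = 0" "(Y - P) * m\<^sup>2 = 0"
    using split terms by linarith+
  then show "(P < X \<longrightarrow> l = 0) \<and> (P < Y \<longrightarrow> m = 0)"
    by auto
qed

lemma product_form_ge_on_unit_curve:
  fixes l m c P x1 x2 y1 y2 :: real
  assumes "0 \<le> l" "0 \<le> m" "l\<^sup>2 + 2 * c * l * m + m\<^sup>2 = 1"
    and "P \<le> x1 * x2" "P \<le> y1 * y2" "2 * P * c \<le> x1 * y2 + y1 * x2"
  shows "P \<le> (l * x1 + m * y1) * (l * x2 + m * y2)"
    and "(l * x1 + m * y1) * (l * x2 + m * y2) \<le> P \<Longrightarrow>
      (P < x1 * x2 \<longrightarrow> l = 0) \<and> (P < y1 * y2 \<longrightarrow> m = 0)"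
proof -
  have expand: "(l * x1 + m * y1) * (l * x2 + m * y2) =
      (x1 * x2) * l\<^sup>2 + (x1 * y2 + y1 * x2) * l * m + (y1 * y2) * m\<^sup>2"
    by (simp add: algebra_simps power2_eq_square)
  show "P \<le> (l * x1 + m * y1) * (l * x2 + m * y2)"
    "(l * x1 + m * y1) * (l * x2 + m * y2) \<le> P \<Longrightarrow>
      (P < x1 * x2 \<longrightarrow> l = 0) \<and> (P < y1 * y2 \<longrightarrow> m = 0)"
    unfolding expand using quadratic_form_ge_on_unit_curve[OF assms] by blast+
qed

lemma linear_form_ge_on_unit_curve:
  fixes l m c s x y :: real
  assumes "0 \<le> l" "0 \<le> m" "l\<^sup>2 + 2 * c * l * m + m\<^sup>2 = 1"
    and "0 \<le> s" "s \<le> x" "s \<le> y" "s * s * c \<le> x * y"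
  shows "s \<le> l * x + m * y"
    and "l * x + m * y \<le> s \<Longrightarrow> (s < x \<longrightarrow> l = 0) \<and> (s < y \<longrightarrow> m = 0)"
proof -
  have "s * s \<le> x * x" "s * s \<le> y * y"
    using assms(4-6) by (simp_all add: mult_mono)
  note form = product_form_ge_on_unit_curve[of l m c "s * s" x x y y, OF assms(1-3) this]
  have nonneg: "0 \<le> l * x + m * y"
    using assms by simp
  have "s * s \<le> (l * x + m * y) * (l * x + m * y)"
    using form(1) assms(7) by simp
  then show "s \<le> l * x + m * y"
    using nonneg by (metis power2_eq_square power2_le_imp_le)
  assume "l * x + m * y \<le> s"
  then have "(l * x + m * y) * (l * x + m * y) \<le> s * s"
    using nonneg by (simp add: mult_mono)
  moreover have "s < x \<Longrightarrow> s * s < x * x" "s < y \<Longrightarrow> s * s < y * y"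
    using assms(4) by (simp_all add: mult_strict_mono)
  ultimately show "(s < x \<longrightarrow> l = 0) \<and> (s < y \<longrightarrow> m = 0)"
    using form(2) assms(7) by auto
qed

lemma unit_cone_weights:
  fixes l m c :: real
  assumes "0 \<le> l" "l\<^sup>2 + 2 * c * l * m + m\<^sup>2 = 1"
  shows "m = 0 \<Longrightarrow> l = 1" and "0 \<le> m \<Longrightarrow> l = 0 \<Longrightarrow> m = 1"
  using assms by (auto simp: power2_eq_1_iff)

lemma sides_eq_of_product_le:
  fixes w1 w2 x y :: real
  assumes "0 < w1" "0 < w2" "w1 \<le> x" "w2 \<le> y" "x * y \<le> w1 * w2"
  shows "x = w1" "y = w2"
proof -
  have "w1 * w2 \<le> w1 * y" "w1 * y \<le> x * y"
    using assms by (simp_all add: mult_right_mono)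
  then have "w1 * w2 = w1 * y" "w1 * y = x * y"
    using assms(5) by linarith+
  then show "y = w2" "x = w1"
    using assms(1,2,4) by auto
qed

section \<open>The octagon\<close>

text \<open>In the vertex names, r and t refer to the right and the top side of RA, and u and iu to
  the sides of RP with outer normal u and \<plusminus>\<i> u.\<close>
locale octagon_example =
  fixes a b p q \<delta> :: real and r_u r_iu t_u t_iu :: complex
  assumes angle: "0 < \<delta>" "\<delta> < pi / 2"
    and sides: "0 < b" "b < a" "0 < p" "p < q"
    and area_lt: "a * b < p * q"
    and perimeter_lt: "p + q < a + b"
    and area_cone_1: "2 * (a * b) * cos \<delta> \<le> a * q + p * b"
    and area_cone_2: "2 * (a * b) * sin \<delta> \<le> p * a + b * q"
    and support_r_u: "2 * (r_u \<bullet> 1) = a" "2 * (r_u \<bullet> cis \<delta>) = p"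
    and support_t_iu: "2 * (t_iu \<bullet> \<i>) = b" "2 * (t_iu \<bullet> (\<i> * cis \<delta>)) = q"
    and support_t_u: "2 * (t_u \<bullet> cis \<delta>) = p" "2 * (t_u \<bullet> \<i>) = b"
    and support_r_iu: "2 * (r_iu \<bullet> 1) = a" "2 * (r_iu \<bullet> (\<i> * cis \<delta>)) = - q"
    and bounds_r_u: "\<bar>2 * (r_u \<bullet> \<i>)\<bar> \<le> b" "\<bar>2 * (r_u \<bullet> (\<i> * cis \<delta>))\<bar> \<le> q"
    and bounds_t_iu: "\<bar>2 * (t_iu \<bullet> 1)\<bar> \<le> a" "\<bar>2 * (t_iu \<bullet> cis \<delta>)\<bar> \<le> p"
    and bounds_t_u: "\<bar>2 * (t_u \<bullet> 1)\<bar> \<le> a" "\<bar>2 * (t_u \<bullet> (\<i> * cis \<delta>))\<bar> \<le> q"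
    and bounds_r_iu: "\<bar>2 * (r_iu \<bullet> \<i>)\<bar> \<le> b" "\<bar>2 * (r_iu \<bullet> cis \<delta>)\<bar> \<le> p"
    and nondegenerate: "Im r_u * Re t_iu < Re r_u * Im t_iu"
begin

abbreviation u :: complex where "u \<equiv> cis \<delta>"

definition vertices :: "complex set" where "vertices = {r_u, t_iu, t_u, r_iu}"
definition polygon :: "complex set" where "polygon = symmetric_hull vertices"
definition RA :: "complex set" where "RA = centred_box 1 a b"
definition RP :: "complex set" where "RP = centred_box u p q"

abbreviation width_product :: "complex \<Rightarrow> real" where
  "width_product d \<equiv> width vertices d * width vertices (\<i> * d)"
abbreviation width_sum :: "complex \<Rightarrow> real" where
  "width_sum d \<equiv> width vertices d + width vertices (\<i> * d)"

lemma finite_vertices [simp]: "finite vertices" and vertices_nonempty [simp]: "vertices \<noteq> {}"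
  unfolding vertices_def by simp_all

lemma cos_pos: "0 < cos \<delta>" and sin_pos: "0 < sin \<delta>"
  using angle by (simp_all add: cos_gt_zero sin_gt_zero)

lemma vertices_subset_RA: "vertices \<subseteq> RA" and vertices_subset_RP: "vertices \<subseteq> RP"
  unfolding vertices_def RA_def RP_def insert_subset mem_centred_box_iff mult_1_right
  using sides by (simp_all only: support_r_u support_t_iu support_t_u support_r_iu bounds_r_u
      bounds_t_iu bounds_t_u bounds_r_iu empty_subsetI simp_thms) simp_all

lemma polygon_subset_RA: "polygon \<subseteq> RA" and polygon_subset_RP: "polygon \<subseteq> RP"
  using vertices_subset_RA vertices_subset_RP unfolding polygon_def RA_def RP_def
  by (simp_all add: symmetric_hull_subset_centred_box)

lemma width_1: "width vertices 1 = a" and width_i: "width vertices \<i> = b"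
  and width_u: "width vertices u = p" and width_iu: "width vertices (\<i> * u) = q"
proof -
  have "vertices \<subseteq> centred_box (\<i> * 1) b a" "vertices \<subseteq> centred_box (\<i> * u) q p"
    using vertices_subset_RA vertices_subset_RP unfolding RA_def RP_def centred_box_rotate .
  then show "width vertices 1 = a" "width vertices \<i> = b" "width vertices u = p" "width vertices (\<i> * u) = q"
    using width_eq_box_side[OF finite_vertices, of _ _ _ r_u] width_eq_box_side[OF finite_vertices, of _ _ _ t_iu]
      vertices_subset_RA vertices_subset_RP support_r_u support_t_iu sides
    unfolding RA_def RP_def by (auto simp: vertices_def)
qed

lemma convex_polygon: "convex_polygon polygon"
proof -
  have not_collinear: "\<not> collinear {r_u, t_iu, - r_u}"
  proof
    assume "collinear {r_u, t_iu, - r_u}"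
    then have "collinear {0, r_u - t_iu, - r_u - t_iu}"
      using collinear_3[of r_u t_iu "- r_u"] by (simp add: NO_MATCH_def)
    moreover have "r_u \<noteq> t_iu"
      using nondegenerate by (auto simp: mult.commute)
    ultimately obtain r where "- r_u - t_iu = of_real r * (r_u - t_iu)"
      by (auto simp: collinear_iff_Reals field_simps elim!: Reals_cases)
    then have "- Re r_u - Re t_iu = r * (Re r_u - Re t_iu)" "- Im r_u - Im t_iu = r * (Im r_u - Im t_iu)"
      by (simp_all add: complex_eq_iff)
    then have "Re r_u * Im t_iu = Im r_u * Re t_iu"
      by algebra
    then show False
      using nondegenerate by simp
  qed
  then have "\<not> affine_dependent {r_u, t_iu, - r_u}" "card {r_u, t_iu, - r_u} = Suc DIM(complex)"
    using collinear_3_eq_affine_dependent[of r_u t_iu "- r_u"] by auto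
  then have "interior (convex hull {r_u, t_iu, - r_u}) \<noteq> {}"
    using interior_convex_hull_eq_empty[of "{r_u, t_iu, - r_u}"] by simp
  moreover have "convex hull {r_u, t_iu, - r_u} \<subseteq> polygon"
    unfolding polygon_def symmetric_hull_def vertices_def by (rule hull_mono) auto
  ultimately have "interior polygon \<noteq> {}"
    using interior_mono by blast
  moreover have "finite (vertices \<union> uminus ` vertices)"
    by simp
  ultimately show ?thesis
    unfolding convex_polygon_def polygon_def symmetric_hull_def by blast
qed

lemma width_first_cone:
  assumes "0 \<le> l" "0 \<le> m"
  defines "e \<equiv> of_real l + of_real m * u"
  shows "l * a + m * p \<le> width vertices e" "l * b + m * q \<le> width vertices (\<i> * e)"
proof -
  have "2 * (r_u \<bullet> e) = l * (2 * (r_u \<bullet> 1)) + m * (2 * (r_u \<bullet> u))"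
    "2 * (t_iu \<bullet> (\<i> * e)) = l * (2 * (t_iu \<bullet> \<i>)) + m * (2 * (t_iu \<bullet> (\<i> * u)))"
    unfolding e_def inner_cone_combination by (simp_all add: algebra_simps)
  then have "2 * (r_u \<bullet> e) = l * a + m * p" "2 * (t_iu \<bullet> (\<i> * e)) = l * b + m * q"
    by (simp_all only: support_r_u support_t_iu)
  moreover have "\<bar>2 * (r_u \<bullet> e)\<bar> \<le> width vertices e" "\<bar>2 * (t_iu \<bullet> (\<i> * e))\<bar> \<le> width vertices (\<i> * e)"
    by (simp_all add: width_ge vertices_def)
  ultimately show "l * a + m * p \<le> width vertices e" "l * b + m * q \<le> width vertices (\<i> * e)"
    by (simp_all add: abs_le_iff)
qed

lemma width_second_cone:
  assumes "0 \<le> l" "0 \<le> m"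
  defines "e \<equiv> of_real l * u + of_real m * \<i>"
  shows "l * p + m * b \<le> width vertices e" "l * q + m * a \<le> width vertices (\<i> * e)"
proof -
  have "2 * (t_u \<bullet> e) = l * (2 * (t_u \<bullet> u)) + m * (2 * (t_u \<bullet> \<i>))"
    "2 * (r_iu \<bullet> (\<i> * e)) = l * (2 * (r_iu \<bullet> (\<i> * u))) - m * (2 * (r_iu \<bullet> 1))"
    unfolding e_def inner_cone_combination by (simp_all add: algebra_simps)
  then have "2 * (t_u \<bullet> e) = l * p + m * b" "2 * (r_iu \<bullet> (\<i> * e)) = - (l * q + m * a)"
    by (simp_all only: support_t_u support_r_iu)
  moreover have "\<bar>2 * (t_u \<bullet> e)\<bar> \<le> width vertices e" "\<bar>2 * (r_iu \<bullet> (\<i> * e))\<bar> \<le> width vertices (\<i> * e)"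
    by (simp_all add: width_ge vertices_def)
  ultimately show "l * p + m * b \<le> width vertices e" "l * q + m * a \<le> width vertices (\<i> * e)"
    by (simp_all add: abs_le_iff)
qed

lemma perimeter_cone_condition:
  assumes "c \<le> 1"
  shows "(p + q) * (p + q) * c \<le> (a + b) * (p + q)" "(p + q) * (p + q) * c \<le> (p + q) * (a + b)"
proof -
  have "(p + q) * c \<le> a + b"
    using assms perimeter_lt sides by (smt (verit) mult_left_le)
  then show "(p + q) * (p + q) * c \<le> (a + b) * (p + q)" "(p + q) * (p + q) * c \<le> (p + q) * (a + b)"
    using sides by (simp_all add: mult.commute mult.left_commute mult_left_mono)
qed

lemma first_cone_bounds:
  assumes "0 \<le> l" "0 \<le> m" "norm (of_real l + of_real m * u) = 1"
  defines "e \<equiv> of_real l + of_real m * u"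
  shows "a * b \<le> width_product e"
    and "width_product e \<le> a * b \<Longrightarrow> e = 1"
    and "p + q \<le> width_sum e"
    and "width_sum e \<le> p + q \<Longrightarrow> e = u"
proof -
  have unit: "l\<^sup>2 + 2 * cos \<delta> * l * m + m\<^sup>2 = 1"
    using norm_cone_combination_sq(1)[of u l m] assms(3) by simp
  note area = product_form_ge_on_unit_curve[OF assms(1,2) unit, of "a * b" a b p q]
  note perimeter = linear_form_ge_on_unit_curve[OF assms(1,2) unit, of "p + q" "a + b" "p + q"]
  note widths = width_first_cone[OF assms(1,2), folded e_def]
  have prod: "(l * a + m * p) * (l * b + m * q) \<le> width_product e"
    using widths assms(1,2) sides width_nonneg[OF finite_vertices vertices_nonempty]
    by (intro mult_mono) simp_all
  have cond: "(p + q) * (p + q) * cos \<delta> \<le> (a + b) * (p + q)"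
    by (rule perimeter_cone_condition) simp
  show "a * b \<le> width_product e"
    using area(1) area_lt area_cone_1 prod by simp
  show "p + q \<le> width_sum e"
    using perimeter(1) perimeter_lt sides cond widths by (simp add: algebra_simps)
  show "e = 1" if "width_product e \<le> a * b"
    using area(2) that prod area_lt area_cone_1 unit_cone_weights(1)[OF assms(1) unit]
    unfolding e_def by simp
  show "e = u" if "width_sum e \<le> p + q"
    using perimeter(2) that widths perimeter_lt sides cond unit_cone_weights(2)[OF assms(1) unit assms(2)]
    unfolding e_def by (simp add: algebra_simps)
qed

lemma second_cone_bounds:
  assumes "0 \<le> l" "0 \<le> m" "norm (of_real l * u + of_real m * \<i>) = 1"
  defines "e \<equiv> of_real l * u + of_real m * \<i>"
  shows "a * b \<le> width_product e"
    and "width_product e \<le> a * b \<Longrightarrow> l = 0"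
    and "p + q \<le> width_sum e"
    and "width_sum e \<le> p + q \<Longrightarrow> e = u"
proof -
  have unit: "l\<^sup>2 + 2 * sin \<delta> * l * m + m\<^sup>2 = 1"
    using norm_cone_combination_sq(2)[of u l m] assms(3) by simp
  note area = product_form_ge_on_unit_curve[OF assms(1,2) unit, of "a * b" p q b a]
  note perimeter = linear_form_ge_on_unit_curve[OF assms(1,2) unit, of "p + q" "p + q" "a + b"]
  note widths = width_second_cone[OF assms(1,2), folded e_def]
  have prod: "(l * p + m * b) * (l * q + m * a) \<le> width_product e"
    using widths assms(1,2) sides width_nonneg[OF finite_vertices vertices_nonempty]
    by (intro mult_mono) simp_all
  have cond: "(p + q) * (p + q) * sin \<delta> \<le> (p + q) * (a + b)"
    by (rule perimeter_cone_condition) simp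
  show "a * b \<le> width_product e"
    using area(1) area_lt area_cone_2 prod by (simp add: mult.commute)
  show "p + q \<le> width_sum e"
    using perimeter(1) perimeter_lt sides cond widths by (simp add: algebra_simps)
  show "l = 0" if "width_product e \<le> a * b"
    using area(2) that prod area_lt area_cone_2 by (simp add: mult.commute)
  show "e = u" if "width_sum e \<le> p + q"
    using perimeter(2) that widths perimeter_lt sides cond unit_cone_weights(1)[OF assms(1) unit]
    unfolding e_def by (simp add: algebra_simps)
qed

lemma quadrant_bounds:
  assumes "norm e = 1" "0 < Re e" "0 \<le> Im e"
  shows "a * b \<le> width_product e"
    and "width_product e \<le> a * b \<Longrightarrow> e = 1"
    and "p + q \<le> width_sum e"
    and "width_sum e \<le> p + q \<Longrightarrow> e = u"
proof -
  consider l m where "0 \<le> l" "0 \<le> m" "e = of_real l + of_real m * u"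
    | l m where "0 \<le> l" "0 \<le> m" "e = of_real l * u + of_real m * \<i>"
    by (rule first_quadrant_cone_decomposition[of u e]) (use cos_pos sin_pos assms in auto)
  then have "a * b \<le> width_product e \<and>
      (width_product e \<le> a * b \<longrightarrow> e = 1) \<and>
      p + q \<le> width_sum e \<and>
      (width_sum e \<le> p + q \<longrightarrow> e = u)"
  proof cases
    case 1
    then show ?thesis
      using first_cone_bounds[OF 1(1,2)] assms(1) unfolding 1(3) by blast
  next
    case 2
    have "e \<noteq> of_real m * \<i>"
      using assms(2) by auto
    then show ?thesis
      using second_cone_bounds[OF 2(1,2)] assms(1) unfolding 2(3) by auto
  qed
  then show "a * b \<le> width_product e"
    and "width_product e \<le> a * b \<Longrightarrow> e = 1"
    and "p + q \<le> width_sum e"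
    and "width_sum e \<le> p + q \<Longrightarrow> e = u"
    by blast+
qed

lemma width_bounds:
  assumes "norm d = 1"
  shows "a * b \<le> width_product d"
    and "width_product d \<le> a * b \<Longrightarrow> d \<in> {1, - 1, \<i>, - \<i>}"
    and "p + q \<le> width_sum d"
    and "width_sum d \<le> p + q \<Longrightarrow> d \<in> {u, - u, \<i> * u, - (\<i> * u)}"
proof -
  define f where "f z = (width_product z, width_sum z)"
    for z
  have "f (\<i> * z) = f z" for z
    unfolding f_def by (simp add: mult.commute add.commute)
  then obtain e where e: "0 < Re e" "0 \<le> Im e" "f e = f d" "d \<in> {e, - e, \<i> * e, - (\<i> * e)}"
    using quarter_turn_reduction[of f d] assms by (metis norm_zero zero_neq_one)
  then have "norm e = 1"
    using assms by (auto simp: norm_mult)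
  note bounds = quadrant_bounds[OF this e(1,2)]
  have same: "width_product d = width_product e"
    "width_sum d = width_sum e"
    using e(3) unfolding f_def by simp_all
  show "a * b \<le> width_product d"
    "p + q \<le> width_sum d"
    using bounds(1,3) unfolding same .
  show "d \<in> {1, - 1, \<i>, - \<i>}" if "width_product d \<le> a * b"
    using bounds(2) that e(4) unfolding same by (auto simp flip: mult.assoc)
  show "d \<in> {u, - u, \<i> * u, - (\<i> * u)}" if "width_sum d \<le> p + q"
    using bounds(4) that e(4) unfolding same by blast
qed

lemma widths_le_sides:
  assumes "polygon \<subseteq> rect_set c t a' b'"
  shows "width vertices (cis t) \<le> a'" "width vertices (\<i> * cis t) \<le> b'"
  using width_le_rect_sides[OF finite_vertices vertices_nonempty] assms unfolding polygon_def by auto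

lemma widths_pos: "0 < width vertices (cis t)" "0 < width vertices (\<i> * cis t)"
proof -
  have "0 < a * b"
    using sides by simp
  then have "0 < width_product (cis t)"
    using width_bounds(1)[of "cis t"] by simp
  then show "0 < width vertices (cis t)" "0 < width vertices (\<i> * cis t)"
    using width_nonneg[OF finite_vertices vertices_nonempty, of "cis t"]
      width_nonneg[OF finite_vertices vertices_nonempty, of "\<i> * cis t"]
    by (auto simp: zero_less_mult_iff)
qed

lemma rect_eq_centred_box_of_widths:
  assumes "polygon \<subseteq> rect_set c t (width vertices (cis t)) (width vertices (\<i> * cis t))"
  shows "rect_set c t (width vertices (cis t)) (width vertices (\<i> * cis t)) =
    centred_box (cis t) (width vertices (cis t)) (width vertices (\<i> * cis t))"
proof -
  obtain v where v: "v \<in> vertices" "\<bar>2 * (v \<bullet> cis t)\<bar> = width vertices (cis t)"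
    using width_attained[OF finite_vertices vertices_nonempty] by blast
  obtain w where w: "w \<in> vertices" "\<bar>2 * (w \<bullet> (\<i> * cis t))\<bar> = width vertices (\<i> * cis t)"
    using width_attained[OF finite_vertices vertices_nonempty] by blast
  show ?thesis
    using symmetric_pair_in_symmetric_hull[OF v(1)] symmetric_pair_in_symmetric_hull[OF w(1)] assms
    unfolding polygon_def by (intro rect_set_eq_centred_box[OF refl _ _ v(2) _ _ w(2)]) auto
qed

lemma centred_box_widths_RA:
  assumes "d \<in> {1, - 1, \<i>, - \<i>}"
  shows "centred_box d (width vertices d) (width vertices (\<i> * d)) = RA"
proof -
  have rotated: "centred_box \<i> b a = RA"
    using centred_box_rotate[of 1 b a] unfolding RA_def by simp
  from assms consider "d = 1" | "d = - 1" | "d = \<i>" | "d = - \<i>"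
    by blast
  then show ?thesis
    by cases (simp_all add: centred_box_uminus width_1 width_i rotated RA_def)
qed

lemma centred_box_widths_RP:
  assumes "d \<in> {u, - u, \<i> * u, - (\<i> * u)}"
  shows "centred_box d (width vertices d) (width vertices (\<i> * d)) = RP"
proof -
  have rotated: "centred_box (\<i> * u) q p = RP"
    using centred_box_rotate[of u q p] unfolding RP_def by simp
  from assms consider "d = u" | "d = - u" | "d = \<i> * u" | "d = - (\<i> * u)"
    by blast
  then show ?thesis
    by cases (simp_all add: centred_box_uminus width_u width_iu rotated RP_def)
qed

lemma enclosing_rect_area:
  assumes "polygon \<subseteq> rect_set c t a' b'"
  shows "a * b \<le> a' * b'"
    and "a' * b' \<le> a * b \<Longrightarrow> rect_set c t a' b' = RA \<and> (b' \<le> a' \<longrightarrow> cis t \<in> {1, - 1})"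
proof -
  note le = widths_le_sides[OF assms] and pos = widths_pos[of t]
  have "width_product (cis t) \<le> a' * b'"
    using le pos by (intro mult_mono) simp_all
  then show "a * b \<le> a' * b'"
    using width_bounds(1)[of "cis t"] by simp
  assume "a' * b' \<le> a * b"
  then have "a' * b' \<le> width_product (cis t)"
    using width_bounds(1)[of "cis t"] by simp
  note sides_eq = sides_eq_of_product_le[OF pos le this]
  have axis: "cis t \<in> {1, - 1, \<i>, - \<i>}"
    using width_bounds(2)[of "cis t"] \<open>a' * b' \<le> a * b\<close> unfolding sides_eq by simp
  have "rect_set c t a' b' = RA"
    using rect_eq_centred_box_of_widths assms centred_box_widths_RA[OF axis] unfolding sides_eq by simp
  moreover have "cis t \<in> {1, - 1}" if "b' \<le> a'"
  proof (rule ccontr)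
    assume "cis t \<notin> {1, - 1}"
    then have "cis t = \<i> \<or> cis t = - \<i>"
      using axis by blast
    then have "a' = b" "b' = a"
      unfolding sides_eq by (auto simp: width_1 width_i)
    then show False
      using that sides by simp
  qed
  ultimately show "rect_set c t a' b' = RA \<and> (b' \<le> a' \<longrightarrow> cis t \<in> {1, - 1})"
    by blast
qed

lemma enclosing_rect_perimeter:
  assumes "polygon \<subseteq> rect_set c t a' b'"
  shows "p + q \<le> a' + b'"
    and "a' + b' \<le> p + q \<Longrightarrow> rect_set c t a' b' = RP \<and> (b' \<le> a' \<longrightarrow> cis t \<in> {\<i> * u, - (\<i> * u)})"
proof -
  note le = widths_le_sides[OF assms]
  show "p + q \<le> a' + b'"
    using width_bounds(3)[of "cis t"] le by simp
  assume "a' + b' \<le> p + q"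
  then have sides_eq: "a' = width vertices (cis t)" "b' = width vertices (\<i> * cis t)"
    using width_bounds(3)[of "cis t"] le by simp_all
  have diagonal: "cis t \<in> {u, - u, \<i> * u, - (\<i> * u)}"
    using width_bounds(4)[of "cis t"] \<open>a' + b' \<le> p + q\<close> unfolding sides_eq by simp
  have "rect_set c t a' b' = RP"
    using rect_eq_centred_box_of_widths assms centred_box_widths_RP[OF diagonal] unfolding sides_eq by simp
  moreover have "cis t \<in> {\<i> * u, - (\<i> * u)}" if "b' \<le> a'"
  proof (rule ccontr)
    assume "cis t \<notin> {\<i> * u, - (\<i> * u)}"
    then have "cis t = u \<or> cis t = - u"
      using diagonal by blast
    then have "a' = p" "b' = q"
      unfolding sides_eq by (auto simp: width_u width_iu)
    then show False
      using that sides by simp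
  qed
  ultimately show "rect_set c t a' b' = RP \<and> (b' \<le> a' \<longrightarrow> cis t \<in> {\<i> * u, - (\<i> * u)})"
    by blast
qed

lemma RA_rect_set: "\<exists>c. RA = rect_set c 0 a b" and RP_rect_set: "\<exists>c. RP = rect_set c \<delta> p q"
  using centred_box_eq_rect_set[of 0 a b] centred_box_eq_rect_set[of \<delta> p q]
  unfolding RA_def RP_def by auto

lemma rect_area_RA: "rect_area RA = a * b" and rect_perimeter_RP: "rect_perimeter RP = 2 * (p + q)"
  using RA_rect_set RP_rect_set sides rect_area_rect_set rect_perimeter_rect_set by auto

lemma enclosing_RA: "enclosing_rectangle polygon RA" and enclosing_RP: "enclosing_rectangle polygon RP"
proof -
  have "0 < a" "0 < q"
    using sides by linarith+
  then show "enclosing_rectangle polygon RA" "enclosing_rectangle polygon RP"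
    using RA_rect_set RP_rect_set sides polygon_subset_RA polygon_subset_RP
    unfolding enclosing_rectangle_def is_rectangle_def by blast+
qed

lemma min_area_rect_iff: "min_area_rect polygon R \<longleftrightarrow> R = RA"
proof
  assume "min_area_rect polygon R"
  then have "enclosing_rectangle polygon R" "rect_area R \<le> a * b"
    using enclosing_RA rect_area_RA unfolding min_area_rect_def by auto
  moreover obtain c t a' b' where "0 < a'" "0 < b'" "R = rect_set c t a' b'" "polygon \<subseteq> R"
    using calculation(1) by (rule enclosing_rectangleE)
  ultimately show "R = RA"
    using enclosing_rect_area(2)[of c t a' b'] by (simp add: rect_area_rect_set)
next
  have "rect_area RA \<le> rect_area R'" if enclosing: "enclosing_rectangle polygon R'" for R'
  proof -
    obtain c t a' b' where "0 < a'" "0 < b'" "R' = rect_set c t a' b'" "polygon \<subseteq> R'"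
      using enclosing by (rule enclosing_rectangleE)
    then show ?thesis
      using enclosing_rect_area(1)[of c t a' b'] rect_area_RA by (simp add: rect_area_rect_set)
  qed
  then show "R = RA \<Longrightarrow> min_area_rect polygon R"
    using enclosing_RA unfolding min_area_rect_def by blast
qed

lemma min_perimeter_rect_iff: "min_perimeter_rect polygon R \<longleftrightarrow> R = RP"
proof
  assume "min_perimeter_rect polygon R"
  then have "enclosing_rectangle polygon R" "rect_perimeter R \<le> 2 * (p + q)"
    using enclosing_RP rect_perimeter_RP unfolding min_perimeter_rect_def by auto
  moreover obtain c t a' b' where "0 < a'" "0 < b'" "R = rect_set c t a' b'" "polygon \<subseteq> R"
    using calculation(1) by (rule enclosing_rectangleE)
  ultimately show "R = RP"
    using enclosing_rect_perimeter(2)[of c t a' b'] by (simp add: rect_perimeter_rect_set)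
next
  have "rect_perimeter RP \<le> rect_perimeter R'" if enclosing: "enclosing_rectangle polygon R'" for R'
  proof -
    obtain c t a' b' where "0 < a'" "0 < b'" "R' = rect_set c t a' b'" "polygon \<subseteq> R'"
      using enclosing by (rule enclosing_rectangleE)
    then show ?thesis
      using enclosing_rect_perimeter(1)[of c t a' b'] rect_perimeter_RP by (simp add: rect_perimeter_rect_set)
  qed
  then show "R = RP \<Longrightarrow> min_perimeter_rect polygon R"
    using enclosing_RP unfolding min_perimeter_rect_def by blast
qed

lemma orientation_RA:
  assumes "rect_orientation RA d"
  shows "d \<in> {1, - 1}"
proof -
  obtain c t a' b' where "0 < b'" "b' \<le> a'" "RA = rect_set c t a' b'" "d = cis t"
    using assms unfolding rect_orientation_def by blast
  moreover have "a' * b' \<le> a * b"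
    using calculation rect_area_RA rect_area_rect_set[of a' b' c t] by simp
  ultimately show ?thesis
    using enclosing_rect_area(2)[of c t a' b'] polygon_subset_RA by simp
qed

lemma orientation_RP:
  assumes "rect_orientation RP d"
  shows "d \<in> {\<i> * u, - (\<i> * u)}"
proof -
  obtain c t a' b' where "0 < b'" "b' \<le> a'" "RP = rect_set c t a' b'" "d = cis t"
    using assms unfolding rect_orientation_def by blast
  moreover have "a' + b' \<le> p + q"
    using calculation rect_perimeter_RP rect_perimeter_rect_set[of a' b' c t] by simp
  ultimately show ?thesis
    using enclosing_rect_perimeter(2)[of c t a' b'] polygon_subset_RP by simp
qed

lemma line_angle_orientations:
  assumes "dA \<in> {1, - 1}" "dP \<in> {\<i> * u, - (\<i> * u)}"
  shows "line_angle dA dP = pi / 2 - \<delta>"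
proof -
  have "\<bar>dA \<bullet> dP\<bar> = sin \<delta>"
    using assms sin_pos by (auto simp: inner_complex_def)
  also have "sin \<delta> = cos (pi / 2 - \<delta>)"
    by (simp add: cos_diff)
  finally show ?thesis
    unfolding line_angle_def using angle by (simp add: arccos_cos)
qed

theorem optimal_rectangles:
  "convex_polygon polygon \<and>
   min_area_rect polygon RA \<and> (\<forall>R. min_area_rect polygon R \<longrightarrow> R = RA) \<and>
   min_perimeter_rect polygon RP \<and> (\<forall>R. min_perimeter_rect polygon R \<longrightarrow> R = RP) \<and>
   (\<forall>dA dP. rect_orientation RA dA \<and> rect_orientation RP dP \<longrightarrow> line_angle dA dP = pi / 2 - \<delta>)"
  using convex_polygon min_area_rect_iff[of RA] min_area_rect_iff min_perimeter_rect_iff[of RP]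
    min_perimeter_rect_iff orientation_RA orientation_RP line_angle_orientations
  by simp

end

section \<open>A family of examples\<close>

text \<open>The side lengths satisfy (a + b) - (p + q) = p q - a b = \<delta>^2 / 16 with b = 1; each vertex
  is the intersection of the two side lines of RA and RP named in octagon_example.\<close>
definition example_a :: "real \<Rightarrow> real" where "example_a \<delta> = 1 + 3 / 4 * \<delta> + \<delta>\<^sup>2 / 16"
definition example_p :: "real \<Rightarrow> real" where "example_p \<delta> = 1 + \<delta> / 4"
definition example_q :: "real \<Rightarrow> real" where "example_q \<delta> = 1 + \<delta> / 2"

definition example_r_u :: "real \<Rightarrow> complex" where
  "example_r_u \<delta> = Complex (example_a \<delta> / 2) ((example_p \<delta> - example_a \<delta> * cos \<delta>) / (2 * sin \<delta>))"
definition example_t_iu :: "real \<Rightarrow> complex" where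
  "example_t_iu \<delta> = Complex ((cos \<delta> - example_q \<delta>) / (2 * sin \<delta>)) (1 / 2)"
definition example_t_u :: "real \<Rightarrow> complex" where
  "example_t_u \<delta> = Complex ((example_p \<delta> - sin \<delta>) / (2 * cos \<delta>)) (1 / 2)"
definition example_r_iu :: "real \<Rightarrow> complex" where
  "example_r_iu \<delta> = Complex (example_a \<delta> / 2) ((example_a \<delta> * sin \<delta> - example_q \<delta>) / (2 * cos \<delta>))"

lemmas example_defs = example_a_def example_p_def example_q_def example_r_u_def example_t_iu_def
  example_t_u_def example_r_iu_def

lemma example_support:
  assumes "0 < \<delta>" "\<delta> < pi / 2"
  shows "2 * (example_r_u \<delta> \<bullet> 1) = example_a \<delta>" "2 * (example_r_u \<delta> \<bullet> cis \<delta>) = example_p \<delta>"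
    "2 * (example_t_iu \<delta> \<bullet> \<i>) = 1" "2 * (example_t_iu \<delta> \<bullet> (\<i> * cis \<delta>)) = example_q \<delta>"
    "2 * (example_t_u \<delta> \<bullet> cis \<delta>) = example_p \<delta>" "2 * (example_t_u \<delta> \<bullet> \<i>) = 1"
    "2 * (example_r_iu \<delta> \<bullet> 1) = example_a \<delta>" "2 * (example_r_iu \<delta> \<bullet> (\<i> * cis \<delta>)) = - example_q \<delta>"
  using assms sin_gt_zero[of \<delta>] cos_gt_zero[of \<delta>]
  unfolding example_r_u_def example_t_iu_def example_t_u_def example_r_iu_def
  by (simp_all add: inner_complex_def field_simps)

lemma eventually_octagon_example:
  "\<forall>\<^sub>F \<delta> in at_right 0. octagon_example (example_a \<delta>) 1 (example_p \<delta>) (example_q \<delta>) \<delta>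
     (example_r_u \<delta>) (example_r_iu \<delta>) (example_t_u \<delta>) (example_t_iu \<delta>)"
proof -
  have "\<forall>\<^sub>F \<delta> in at_right 0. 0 < \<delta> \<and> \<delta> < pi / 2"
    using eventually_at_right_real[of 0 "pi / 2"] by (simp add: eventually_mono)
  moreover have "\<forall>\<^sub>F \<delta> in at_right 0. 1 < example_a \<delta> \<and> 0 < example_p \<delta> \<and> example_p \<delta> < example_q \<delta> \<and>
      example_a \<delta> * 1 < example_p \<delta> * example_q \<delta> \<and> example_p \<delta> + example_q \<delta> < example_a \<delta> + 1 \<and>
      2 * (example_a \<delta> * 1) * cos \<delta> \<le> example_a \<delta> * example_q \<delta> + example_p \<delta> * 1 \<and>
      2 * (example_a \<delta> * 1) * sin \<delta> \<le> example_p \<delta> * example_a \<delta> + 1 * example_q \<delta>"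
    unfolding example_defs by (intro eventually_conj; real_asymp)
  moreover have "\<forall>\<^sub>F \<delta> in at_right 0.
      \<bar>2 * (example_r_u \<delta> \<bullet> \<i>)\<bar> \<le> 1 \<and> \<bar>2 * (example_r_u \<delta> \<bullet> (\<i> * cis \<delta>))\<bar> \<le> example_q \<delta> \<and>
      \<bar>2 * (example_t_iu \<delta> \<bullet> 1)\<bar> \<le> example_a \<delta> \<and> \<bar>2 * (example_t_iu \<delta> \<bullet> cis \<delta>)\<bar> \<le> example_p \<delta> \<and>
      \<bar>2 * (example_t_u \<delta> \<bullet> 1)\<bar> \<le> example_a \<delta> \<and> \<bar>2 * (example_t_u \<delta> \<bullet> (\<i> * cis \<delta>))\<bar> \<le> example_q \<delta> \<and>
      \<bar>2 * (example_r_iu \<delta> \<bullet> \<i>)\<bar> \<le> 1 \<and> \<bar>2 * (example_r_iu \<delta> \<bullet> cis \<delta>)\<bar> \<le> example_p \<delta> \<and>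
      Im (example_r_u \<delta>) * Re (example_t_iu \<delta>) < Re (example_r_u \<delta>) * Im (example_t_iu \<delta>)"
    unfolding example_defs by (intro eventually_conj; simp add: inner_complex_def; real_asymp)
  ultimately show ?thesis
  proof eventually_elim
    case (elim \<delta>)
    then show ?case
      using example_support[of \<delta>] zero_less_one unfolding octagon_example_def by blast
  qed
qed

theorem mainTheorem1:
  fixes \<epsilon> :: real
  assumes "\<epsilon> > 0"
  shows "\<exists>C RA RP. convex_polygon C \<and>
           min_area_rect C RA \<and> (\<forall>R. min_area_rect C R \<longrightarrow> R = RA) \<and>
           min_perimeter_rect C RP \<and> (\<forall>R. min_perimeter_rect C R \<longrightarrow> R = RP) \<and>
           (\<forall>dA dP. rect_orientation RA dA \<and> rect_orientation RP dP \<longrightarrow>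
              line_angle dA dP > pi / 2 - \<epsilon>)"
proof -
  have "\<forall>\<^sub>F \<delta> in at_right 0. \<delta> < \<epsilon> \<and> octagon_example (example_a \<delta>) 1 (example_p \<delta>) (example_q \<delta>) \<delta>
     (example_r_u \<delta>) (example_r_iu \<delta>) (example_t_u \<delta>) (example_t_iu \<delta>)"
    using eventually_at_right_real[OF assms] eventually_octagon_example
    by eventually_elim auto
  then obtain \<delta> where "\<delta> < \<epsilon>" and "octagon_example (example_a \<delta>) 1 (example_p \<delta>) (example_q \<delta>) \<delta>
     (example_r_u \<delta>) (example_r_iu \<delta>) (example_t_u \<delta>) (example_t_iu \<delta>)"
    using eventually_happens'[OF trivial_limit_at_right_real] by blast
  then interpret octagon_example "example_a \<delta>" 1 "example_p \<delta>" "example_q \<delta>" \<delta>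
    "example_r_u \<delta>" "example_r_iu \<delta>" "example_t_u \<delta>" "example_t_iu \<delta>"
    by blast
  have "pi / 2 - \<epsilon> < pi / 2 - \<delta>"
    using \<open>\<delta> < \<epsilon>\<close> by simp
  then show ?thesis
    using optimal_rectangles by (intro exI[of _ polygon] exI[of _ RA] exI[of _ RP]) presburger
qed

end
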